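(* Let $\mathcal M$ be a multi-ideal. Suppose there are a positive integer $n$ and Banach spaces $E_1,\ldots,E_n,F$ with two properties. First, $\mathcal{M}(E_1,\ldots,E_n,F;\mathbb{K})=\mathcal{L}(E_1,\ldots,E_n,F;\mathbb{K})$. Second, $\mathcal{M}(E_1,\ldots,E_n;F')\neq\mathcal{L}(E_1,\ldots,E_n;F')$. Then no smooth tensor norm represents $\mathcal M$.
   Context: All spaces are over a fixed field $\mathbb{K}=\mathbb{R}$ or $\mathbb{C}$. $\mathcal{L}(E_1,\ldots,E_n;F)$ is the space of continuous $n$-linear maps with the sup norm, and $E'$ is the dual of $E$. A tensor norm is a sequence $\beta=(\beta_n)_{n\ge1}$ where each $\beta_n$ assigns to every $n$-tuple of normed spaces a reasonable crossnorm on $E_1\otimes\cdots\otimes E_n$ with the metric mapping property. $\beta$ is smooth if for every $n$ and all normed $E_1,\ldots,E_n$ the map $\psi\colon(E_1\otimes\cdots\otimes E_n\otimes\mathbb{K},\beta_{n+1})\to(E_1\otimes\cdots\otimes E_n,\beta_n)$, $\psi(x_1\otimes\cdots\otimes x_n\otimes\lambda)=\lambda(x_1\otimes\cdots\otimes x_n)$, is an isometric isomorphism. A multi-ideal $\mathcal M$ assigns to all Banach spaces $E_1,\ldots,E_n,F$ a linear subspace $\mathcal M(E_1,\ldots,E_n;F)\subseteq\mathcal{L}(E_1,\ldots,E_n;F)$ that contains the finite-type maps. It is closed under composition with bounded linear operators on both sides. It carries a complete norm $\|\cdot\|_{\mathcal M}$ satisfying $\|(\lambda_1,\ldots,\lambda_n)\mapsto\lambda_1\cdots\lambda_n\|_{\mathcal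 M}=1$ and $\|t\circ A\circ(u_1,\ldots,u_n)\|_{\mathcal M}\le\|t\|\|A\|_{\mathcal M}\prod\|u_j\|$. $\mathcal M$ is represented by $\beta$ if for every $n$ and all Banach spaces $E_1,\ldots,E_n,F$ the canonical map $\varphi\colon\mathcal{M}(E_1,\ldots,E_n;F')\to(E_1\otimes\cdots\otimes E_n\otimes F,\beta_{n+1})'$, $\varphi(T)(x_1\otimes\cdots\otimes x_n\otimes y)=T(x_1,\ldots,x_n)(y)$, is an isometric isomorphism onto. *)

theory Defs
  imports Complex_Main "HOL-Library.FuncSet"
begin

text \<open>Spaces over the fixed scalar field 'k (instances: real, complex).
  Spaces are explicit structures whose vectors live in a common universe type 'v.\<close>

record ('v,'k) bspace =
  carr :: "'v set"
  vplus :: "'v \<Rightarrow> 'v \<Rightarrow> 'v"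
  vscal :: "'k \<Rightarrow> 'v \<Rightarrow> 'v"
  vzero :: "'v"
  vnorm :: "'v \<Rightarrow> real"

definition vminus :: "('v,'k::real_normed_field) bspace \<Rightarrow> 'v \<Rightarrow> 'v \<Rightarrow> 'v" where
  "vminus E x y = vplus E x (vscal E (-1) y)"

definition nspace :: "('v,'k::real_normed_field) bspace \<Rightarrow> bool" where
  "nspace E \<longleftrightarrow>
     vzero E \<in> carr E \<and>
     (\<forall>x\<in>carr E. \<forall>y\<in>carr E. vplus E x y \<in> carr E) \<and>
     (\<forall>a. \<forall>x\<in>carr E. vscal E a x \<in> carr E) \<and>
     (\<forall>x\<in>carr E. \<forall>y\<in>carr E. \<forall>z\<in>carr E. vplus E (vplus E x y) z = vplus E x (vplus E y z)) \<and>
     (\<forall>x\<in>carr E. \<forall>y\<in>carr E. vplus E x y = vplus E y x) \<and>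
     (\<forall>x\<in>carr E. vplus E x (vzero E) = x) \<and>
     (\<forall>x\<in>carr E. vplus E x (vscal E (-1) x) = vzero E) \<and>
     (\<forall>a. \<forall>x\<in>carr E. \<forall>y\<in>carr E. vscal E a (vplus E x y) = vplus E (vscal E a x) (vscal E a y)) \<and>
     (\<forall>a b. \<forall>x\<in>carr E. vscal E (a + b) x = vplus E (vscal E a x) (vscal E b x)) \<and>
     (\<forall>a b. \<forall>x\<in>carr E. vscal E a (vscal E b x) = vscal E (a * b) x) \<and>
     (\<forall>x\<in>carr E. vscal E 1 x = x) \<and>
     (\<forall>x\<in>carr E. vnorm E x = 0 \<longleftrightarrow> x = vzero E) \<and>
     (\<forall>x\<in>carr E. \<forall>y\<in>carr E. vnorm E (vplus E x y) \<le> vnorm E x + vnorm E y) \<and>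
     (\<forall>a. \<forall>x\<in>carr E. vnorm E (vscal E a x) = norm a * vnorm E x)"

definition banach_space :: "('v,'k::real_normed_field) bspace \<Rightarrow> bool" where
  "banach_space E \<longleftrightarrow> nspace E \<and>
     (\<forall>X. (\<forall>m. X m \<in> carr E) \<and>
          (\<forall>\<epsilon>>0. \<exists>N. \<forall>m\<ge>N. \<forall>k\<ge>N. vnorm E (vminus E (X m) (X k)) < \<epsilon>)
        \<longrightarrow> (\<exists>l\<in>carr E. (\<lambda>m. vnorm E (vminus E (X m) l)) \<longlonglongrightarrow> 0))"

primrec vsum :: "('v,'k::real_normed_field) bspace \<Rightarrow> (nat \<Rightarrow> 'v) \<Rightarrow> nat \<Rightarrow> 'v" where
  "vsum E f 0 = vzero E"
| "vsum E f (Suc m) = vplus E (vsum E f m) (f m)"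

definition prodcarr :: "('v,'k) bspace list \<Rightarrow> 'v list set" where
  "prodcarr Es = {xs. length xs = length Es \<and> (\<forall>i<length Es. xs ! i \<in> carr (Es ! i))}"

definition bop :: "('v,'k::real_normed_field) bspace \<Rightarrow> ('v,'k) bspace \<Rightarrow> ('v \<Rightarrow> 'v) \<Rightarrow> bool" where
  "bop D E u \<longleftrightarrow> (\<forall>x\<in>carr D. u x \<in> carr E) \<and>
     (\<forall>x\<in>carr D. \<forall>y\<in>carr D. u (vplus D x y) = vplus E (u x) (u y)) \<and>
     (\<forall>a. \<forall>x\<in>carr D. u (vscal D a x) = vscal E a (u x)) \<and>
     (\<exists>C. \<forall>x\<in>carr D. vnorm E (u x) \<le> C * vnorm D x)"

definition opnorm :: "('v,'k::real_normed_field) bspace \<Rightarrow> ('v,'k) bspace \<Rightarrow> ('v \<Rightarrow> 'v) \<Rightarrow> real" where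
  "opnorm D E u = Inf {C. C \<ge> 0 \<and> (\<forall>x\<in>carr D. vnorm E (u x) \<le> C * vnorm D x)}"

text \<open>The dual E': bounded linear functionals (extensional: undefined off the carrier).\<close>
definition bdual :: "('v,'k::real_normed_field) bspace \<Rightarrow> ('v \<Rightarrow> 'k) set" where
  "bdual E = {\<phi>. (\<forall>x. x \<notin> carr E \<longrightarrow> \<phi> x = undefined) \<and>
     (\<forall>x\<in>carr E. \<forall>y\<in>carr E. \<phi> (vplus E x y) = \<phi> x + \<phi> y) \<and>
     (\<forall>a. \<forall>x\<in>carr E. \<phi> (vscal E a x) = a * \<phi> x) \<and>
     (\<exists>C. \<forall>x\<in>carr E. norm (\<phi> x) \<le> C * vnorm E x)}"

definition dnorm :: "('v,'k::real_normed_field) bspace \<Rightarrow> ('v \<Rightarrow> 'k) \<Rightarrow> real" where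
  "dnorm E \<phi> = Inf {C. C \<ge> 0 \<and> (\<forall>x\<in>carr E. norm (\<phi> x) \<le> C * vnorm E x)}"

definition multilin :: "('v,'k::real_normed_field) bspace list \<Rightarrow> ('v,'k) bspace \<Rightarrow> ('v list \<Rightarrow> 'v) \<Rightarrow> bool" where
  "multilin Es G T \<longleftrightarrow> (\<forall>xs\<in>prodcarr Es. \<forall>i<length Es. \<forall>y\<in>carr (Es ! i). \<forall>a.
       T (xs[i := vplus (Es ! i) (xs ! i) y]) = vplus G (T xs) (T (xs[i := y])) \<and>
       T (xs[i := vscal (Es ! i) a (xs ! i)]) = vscal G a (T xs))"

definition multilin_form :: "('v,'k::real_normed_field) bspace list \<Rightarrow> ('v list \<Rightarrow> 'k) \<Rightarrow> bool" where
  "multilin_form Es B \<longleftrightarrow> (\<forall>xs\<in>prodcarr Es. \<forall>i<length Es. \<forall>y\<in>carr (Es ! i). \<forall>a.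
       B (xs[i := vplus (Es ! i) (xs ! i) y]) = B xs + B (xs[i := y]) \<and>
       B (xs[i := vscal (Es ! i) a (xs ! i)]) = a * B xs)"

text \<open>\<open>\<L>(E_1,\<dots>,E_n;G)\<close>: continuous n-linear maps (extensional: undefined off the domain).\<close>
definition mlL :: "('v,'k::real_normed_field) bspace list \<Rightarrow> ('v,'k) bspace \<Rightarrow> ('v list \<Rightarrow> 'v) set" where
  "mlL Es G = {T. (\<forall>xs\<in>prodcarr Es. T xs \<in> carr G) \<and>
     (\<forall>xs. xs \<notin> prodcarr Es \<longrightarrow> T xs = undefined) \<and>
     multilin Es G T \<and>
     (\<exists>C. \<forall>xs\<in>prodcarr Es. vnorm G (T xs) \<le> C * (\<Prod>i<length Es. vnorm (Es ! i) (xs ! i)))}"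

definition mlplus :: "('v,'k::real_normed_field) bspace list \<Rightarrow> ('v,'k) bspace \<Rightarrow> ('v list \<Rightarrow> 'v) \<Rightarrow> ('v list \<Rightarrow> 'v) \<Rightarrow> ('v list \<Rightarrow> 'v)" where
  "mlplus Es G S T = (\<lambda>xs. if xs \<in> prodcarr Es then vplus G (S xs) (T xs) else undefined)"

definition mlscal :: "('v,'k::real_normed_field) bspace list \<Rightarrow> ('v,'k) bspace \<Rightarrow> 'k \<Rightarrow> ('v list \<Rightarrow> 'v) \<Rightarrow> ('v list \<Rightarrow> 'v)" where
  "mlscal Es G a T = (\<lambda>xs. if xs \<in> prodcarr Es then vscal G a (T xs) else undefined)"

definition mlzero :: "('v,'k::real_normed_field) bspace list \<Rightarrow> ('v,'k) bspace \<Rightarrow> ('v list \<Rightarrow> 'v)" where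
  "mlzero Es G = (\<lambda>xs. if xs \<in> prodcarr Es then vzero G else undefined)"

definition finite_type :: "('v,'k::real_normed_field) bspace list \<Rightarrow> ('v,'k) bspace \<Rightarrow> ('v list \<Rightarrow> 'v) \<Rightarrow> bool" where
  "finite_type Es G T \<longleftrightarrow> (\<exists>m \<phi> y.
     (\<forall>k<m. \<forall>i<length Es. \<phi> k i \<in> bdual (Es ! i)) \<and> (\<forall>k<m. y k \<in> carr G) \<and>
     T = (\<lambda>xs. if xs \<in> prodcarr Es
                then vsum G (\<lambda>k. vscal G (\<Prod>i<length Es. \<phi> k i (xs ! i)) (y k)) m
                else undefined))"

definition mlcomp :: "('v,'k) bspace list \<Rightarrow> ('v \<Rightarrow> 'v) \<Rightarrow> ('v list \<Rightarrow> 'v) \<Rightarrow> ('v \<Rightarrow> 'v) list \<Rightarrow> ('v list \<Rightarrow> 'v)" where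
  "mlcomp Ds t A us = (\<lambda>xs. if xs \<in> prodcarr Ds then t (A (map2 (\<lambda>u x. u x) us xs)) else undefined)"

text \<open>A copy of the scalar field \<open>\<bbbK>\<close> inside the universe: \<open>a \<mapsto> a e\<close> is an isometric linear bijection.\<close>
definition scalar_space :: "('v,'k::real_normed_field) bspace \<Rightarrow> 'v \<Rightarrow> bool" where
  "scalar_space S e \<longleftrightarrow> banach_space S \<and> e \<in> carr S \<and>
     bij_betw (\<lambda>a. vscal S a e) UNIV (carr S) \<and> (\<forall>a. vnorm S (vscal S a e) = norm a)"

definition coord :: "('v,'k::real_normed_field) bspace \<Rightarrow> 'v \<Rightarrow> 'v \<Rightarrow> 'k" where
  "coord S e x = inv_into UNIV (\<lambda>a. vscal S a e) x"

text \<open>D is (an isometric copy of) the dual F' via the pairing pr: \<open>d \<mapsto> pr d\<close> is an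
  isometric linear bijection of D onto F'.\<close>
definition dual_space :: "('v,'k::real_normed_field) bspace \<Rightarrow> ('v,'k) bspace \<Rightarrow> ('v \<Rightarrow> 'v \<Rightarrow> 'k) \<Rightarrow> bool" where
  "dual_space D F pr \<longleftrightarrow> banach_space D \<and> nspace F \<and>
     (\<forall>d\<in>carr D. restrict (pr d) (carr F) \<in> bdual F) \<and>
     (\<forall>\<phi>\<in>bdual F. \<exists>d\<in>carr D. restrict (pr d) (carr F) = \<phi>) \<and>
     (\<forall>d\<in>carr D. \<forall>d'\<in>carr D. \<forall>y\<in>carr F. pr (vplus D d d') y = pr d y + pr d' y) \<and>
     (\<forall>a. \<forall>d\<in>carr D. \<forall>y\<in>carr F. pr (vscal D a d) y = a * pr d y) \<and>
     (\<forall>d\<in>carr D. \<forall>d'\<in>carr D. restrict (pr d) (carr F) = restrict (pr d') (carr F) \<longrightarrow> d = d') \<and>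
     (\<forall>d\<in>carr D. vnorm D d = dnorm F (restrict (pr d) (carr F)))"

text \<open>Multi-ideals (for n \<ge> 1), relative to all Banach spaces in the universe 'v.\<close>
definition multi_ideal ::
  "(('v,'k::real_normed_field) bspace list \<Rightarrow> ('v,'k) bspace \<Rightarrow> ('v list \<Rightarrow> 'v) set) \<Rightarrow>
   (('v,'k) bspace list \<Rightarrow> ('v,'k) bspace \<Rightarrow> ('v list \<Rightarrow> 'v) \<Rightarrow> real) \<Rightarrow> bool" where
  "multi_ideal M MN \<longleftrightarrow>
    (\<forall>Es G. Es \<noteq> [] \<and> (\<forall>E\<in>set Es. banach_space E) \<and> banach_space G \<longrightarrow>
       M Es G \<subseteq> mlL Es G \<and>
       {T. finite_type Es G T} \<subseteq> M Es G \<and>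
       mlzero Es G \<in> M Es G \<and>
       (\<forall>S\<in>M Es G. \<forall>T\<in>M Es G. mlplus Es G S T \<in> M Es G) \<and>
       (\<forall>a. \<forall>T\<in>M Es G. mlscal Es G a T \<in> M Es G) \<and>
       (\<forall>T\<in>M Es G. MN Es G T = 0 \<longleftrightarrow> T = mlzero Es G) \<and>
       (\<forall>S\<in>M Es G. \<forall>T\<in>M Es G. MN Es G (mlplus Es G S T) \<le> MN Es G S + MN Es G T) \<and>
       (\<forall>a. \<forall>T\<in>M Es G. MN Es G (mlscal Es G a T) = norm a * MN Es G T) \<and>
       (\<forall>X. (\<forall>m. X m \<in> M Es G) \<and>
            (\<forall>\<epsilon>>0. \<exists>N. \<forall>m\<ge>N. \<forall>k\<ge>N. MN Es G (mlplus Es G (X m) (mlscal Es G (-1) (X k))) < \<epsilon>)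
          \<longrightarrow> (\<exists>L\<in>M Es G. (\<lambda>m. MN Es G (mlplus Es G (X m) (mlscal Es G (-1) L))) \<longlonglongrightarrow> 0))) \<and>
    (\<forall>Ds Es G H t A us.
       Es \<noteq> [] \<and> length Ds = length Es \<and> length us = length Es \<and>
       (\<forall>E\<in>set Es. banach_space E) \<and> (\<forall>D\<in>set Ds. banach_space D) \<and>
       banach_space G \<and> banach_space H \<and>
       bop G H t \<and> (\<forall>i<length Es. bop (Ds ! i) (Es ! i) (us ! i)) \<and> A \<in> M Es G
       \<longrightarrow> mlcomp Ds t A us \<in> M Ds H \<and>
           MN Ds H (mlcomp Ds t A us)
             \<le> opnorm G H t * MN Es G A * (\<Prod>i<length Es. opnorm (Ds ! i) (Es ! i) (us ! i))) \<and>
    (\<forall>n S e. n \<ge> 1 \<and> scalar_space S e \<longrightarrow>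
       MN (replicate n S) S
          (\<lambda>xs. if xs \<in> prodcarr (replicate n S)
                then vscal S (\<Prod>x\<leftarrow>xs. coord S e x) e else undefined) = 1)"

text \<open>Algebraic tensor product \<open>E_1 \<otimes> \<dots> \<otimes> E_n\<close>: a tensor is represented by a finite list
  of elementary tensors \<open>x_1 \<otimes> \<dots> \<otimes> x_n\<close> (each a list of vectors); two representations
  denote the same tensor iff every multilinear form sums to the same value on them.
  Sum = append, scalar multiple = scaling the first factor.\<close>
definition tensors :: "('v,'k) bspace list \<Rightarrow> 'v list list set" where
  "tensors Es = {u. \<forall>xs\<in>set u. xs \<in> prodcarr Es}"

definition teq :: "('v,'k::real_normed_field) bspace list \<Rightarrow> 'v list list \<Rightarrow> 'v list list \<Rightarrow> bool" where
  "teq Es u w \<longleftrightarrow> (\<forall>B. multilin_form Es B \<longrightarrow> (\<Sum>xs\<leftarrow>u. B xs) = (\<Sum>xs\<leftarrow>w. B xs))"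

definition tscal :: "('v,'k::real_normed_field) bspace list \<Rightarrow> 'k \<Rightarrow> 'v list list \<Rightarrow> 'v list list" where
  "tscal Es a u = map (\<lambda>xs. vscal (Es ! 0) a (xs ! 0) # tl xs) u"

definition reasonable_crossnorm ::
  "('v,'k::real_normed_field) bspace list \<Rightarrow> ('v list list \<Rightarrow> real) \<Rightarrow> bool" where
  "reasonable_crossnorm Es b \<longleftrightarrow>
     (\<forall>u\<in>tensors Es. \<forall>w\<in>tensors Es. teq Es u w \<longrightarrow> b u = b w) \<and>
     (\<forall>u\<in>tensors Es. b u = 0 \<longleftrightarrow> teq Es u []) \<and>
     (\<forall>u\<in>tensors Es. \<forall>w\<in>tensors Es. b (u @ w) \<le> b u + b w) \<and>
     (\<forall>a. \<forall>u\<in>tensors Es. b (tscal Es a u) = norm a * b u) \<and>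
     (\<forall>xs\<in>prodcarr Es. b [xs] \<le> (\<Prod>i<length Es. vnorm (Es ! i) (xs ! i))) \<and>
     (\<forall>\<phi>s. length \<phi>s = length Es \<and> (\<forall>i<length Es. \<phi>s ! i \<in> bdual (Es ! i)) \<longrightarrow>
        (\<forall>u\<in>tensors Es. norm (\<Sum>xs\<leftarrow>u. \<Prod>i<length Es. (\<phi>s ! i) (xs ! i))
                          \<le> (\<Prod>i<length Es. dnorm (Es ! i) (\<phi>s ! i)) * b u))"

definition tensor_norm :: "(('v,'k::real_normed_field) bspace list \<Rightarrow> 'v list list \<Rightarrow> real) \<Rightarrow> bool" where
  "tensor_norm \<beta> \<longleftrightarrow>
     (\<forall>Es. Es \<noteq> [] \<and> (\<forall>E\<in>set Es. nspace E) \<longrightarrow> reasonable_crossnorm Es (\<beta> Es)) \<and>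
     (\<forall>Es Gs us. Es \<noteq> [] \<and> length Gs = length Es \<and> length us = length Es \<and>
        (\<forall>E\<in>set Es. nspace E) \<and> (\<forall>G\<in>set Gs. nspace G) \<and>
        (\<forall>i<length Es. bop (Es ! i) (Gs ! i) (us ! i)) \<longrightarrow>
        (\<forall>u\<in>tensors Es. \<beta> Gs (map (\<lambda>xs. map2 (\<lambda>f x. f x) us xs) u)
                          \<le> (\<Prod>i<length Es. opnorm (Es ! i) (Gs ! i) (us ! i)) * \<beta> Es u))"

text \<open>Smoothness: \<open>\<psi>(x_1 \<otimes> \<dots> \<otimes> x_n \<otimes> \<lambda>) = (\<lambda> x_1) \<otimes> x_2 \<otimes> \<dots> \<otimes> x_n\<close> is isometric
  (it is always an algebraic isomorphism), for every copy of \<open>\<bbbK>\<close> in the universe.\<close>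
definition smooth :: "(('v,'k::real_normed_field) bspace list \<Rightarrow> 'v list list \<Rightarrow> real) \<Rightarrow> bool" where
  "smooth \<beta> \<longleftrightarrow>
     (\<forall>Es S e. Es \<noteq> [] \<and> (\<forall>E\<in>set Es. nspace E) \<and> scalar_space S e \<longrightarrow>
        (\<forall>u\<in>tensors (Es @ [S]).
           \<beta> (Es @ [S]) u =
           \<beta> Es (map (\<lambda>zs. vscal (Es ! 0) (coord S e (last zs)) (zs ! 0) # tl (butlast zs)) u)))"

text \<open>Bounded linear functionals on \<open>(E_1 \<otimes> \<dots> \<otimes> E_n, \<beta>_n)\<close>, given by the multilinear
  form B they induce on elementary tensors, and their dual norm.\<close>
definition tbounded :: "(('v,'k::real_normed_field) bspace list \<Rightarrow> 'v list list \<Rightarrow> real) \<Rightarrow>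
    ('v,'k) bspace list \<Rightarrow> ('v list \<Rightarrow> 'k) \<Rightarrow> bool" where
  "tbounded \<beta> Es B \<longleftrightarrow> (\<exists>C. \<forall>u\<in>tensors Es. norm (\<Sum>xs\<leftarrow>u. B xs) \<le> C * \<beta> Es u)"

definition tdnorm :: "(('v,'k::real_normed_field) bspace list \<Rightarrow> 'v list list \<Rightarrow> real) \<Rightarrow>
    ('v,'k) bspace list \<Rightarrow> ('v list \<Rightarrow> 'k) \<Rightarrow> real" where
  "tdnorm \<beta> Es B = Inf {C. C \<ge> 0 \<and> (\<forall>u\<in>tensors Es. norm (\<Sum>xs\<leftarrow>u. B xs) \<le> C * \<beta> Es u)}"

text \<open>\<open>\<M>\<close> is represented by \<open>\<beta>\<close>: \<open>\<phi>(T)(x_1 \<otimes> \<dots> \<otimes> x_n \<otimes> y) = T(x_1,\<dots>,x_n)(y)\<close> is an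
  isometric isomorphism of \<open>\<M>(E_1,\<dots>,E_n;F')\<close> onto \<open>(E_1 \<otimes> \<dots> \<otimes> E_n \<otimes> F, \<beta>_{n+1})'\<close>.
  (Linearity and injectivity of \<open>\<phi>\<close> are automatic.)\<close>
definition represents :: "(('v,'k::real_normed_field) bspace list \<Rightarrow> 'v list list \<Rightarrow> real) \<Rightarrow>
    (('v,'k) bspace list \<Rightarrow> ('v,'k) bspace \<Rightarrow> ('v list \<Rightarrow> 'v) set) \<Rightarrow>
    (('v,'k) bspace list \<Rightarrow> ('v,'k) bspace \<Rightarrow> ('v list \<Rightarrow> 'v) \<Rightarrow> real) \<Rightarrow> bool" where
  "represents \<beta> M MN \<longleftrightarrow>
     (\<forall>Es F D pr. Es \<noteq> [] \<and> (\<forall>E\<in>set Es. banach_space E) \<and> banach_space F \<and> dual_space D F pr \<longrightarrow>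
        (\<forall>T\<in>M Es D.
           tbounded \<beta> (Es @ [F]) (\<lambda>zs. pr (T (butlast zs)) (last zs)) \<and>
           tdnorm \<beta> (Es @ [F]) (\<lambda>zs. pr (T (butlast zs)) (last zs)) = MN Es D T) \<and>
        (\<forall>B. multilin_form (Es @ [F]) B \<and> tbounded \<beta> (Es @ [F]) B \<longrightarrow>
           (\<exists>T\<in>M Es D. \<forall>zs\<in>prodcarr (Es @ [F]). B zs = pr (T (butlast zs)) (last zs))))"

end

theory Submission
  imports Defs
begin

(* Suppose a smooth tensor norm \<beta> represents \<M>.  Pick
   T \<in> \<L>(E_1,...,E_n;F') \ \<M>(E_1,...,E_n;F') and let B(x_1,...,x_n,y) = T(x_1,...,x_n)(y)
   be the associated (n+1)-linear form.  Viewed as a \<bbbK>-valued map, B belongs to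
   \<L>(E_1,...,E_n,F;\<bbbK>) = \<M>(E_1,...,E_n,F;\<bbbK>).  Since \<bbbK> is its own dual, representability
   makes the functional  x_1 \<otimes> ... \<otimes> y \<otimes> \<lambda> \<mapsto> \<lambda> B(x_1,...,y)  bounded for \<beta>_{n+2};
   smoothness says  \<beta>_{n+2}(u \<otimes> 1) = \<beta>_{n+1}(u), so B itself is \<beta>_{n+1}-bounded.
   Surjectivity of the representation gives T' \<in> \<M>(E_1,...,E_n;F') inducing the same form,
   and since an element of F' is determined by its values, T = T' \<in> \<M>, a contradiction. *)

section \<open>Normed spaces and bounded functionals\<close>

lemma ns:
  assumes "nspace E"
  shows ns_zero: "vzero E \<in> carr E"
    and ns_plus: "\<And>x y. x\<in>carr E \<Longrightarrow> y\<in>carr E \<Longrightarrow> vplus E x y \<in> carr E"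
    and ns_scal: "\<And>a x. x\<in>carr E \<Longrightarrow> vscal E a x \<in> carr E"
    and ns_pz: "\<And>x. x\<in>carr E \<Longrightarrow> vplus E x (vzero E) = x"
    and ns_neg: "\<And>x. x\<in>carr E \<Longrightarrow> vplus E x (vscal E (-1) x) = vzero E"
    and ns_sadd: "\<And>a b x. x\<in>carr E \<Longrightarrow> vscal E (a + b) x = vplus E (vscal E a x) (vscal E b x)"
    and ns_smul: "\<And>a b x. x\<in>carr E \<Longrightarrow> vscal E a (vscal E b x) = vscal E (a * b) x"
    and ns_one: "\<And>x. x\<in>carr E \<Longrightarrow> vscal E 1 x = x"
    and ns_n0: "\<And>x. x\<in>carr E \<Longrightarrow> vnorm E x = 0 \<longleftrightarrow> x = vzero E"
    and ns_tri: "\<And>x y. x\<in>carr E \<Longrightarrow> y\<in>carr E \<Longrightarrow> vnorm E (vplus E x y) \<le> vnorm E x + vnorm E y"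
    and ns_nscal: "\<And>a x. x\<in>carr E \<Longrightarrow> vnorm E (vscal E a x) = norm a * vnorm E x"
  using assms unfolding nspace_def by auto

lemma banach_ns: "banach_space S \<Longrightarrow> nspace S"
  unfolding banach_space_def by simp

text \<open>Nonnegativity of the norm: \<open>0 = \<parallel>x - x\<parallel> \<le> 2\<parallel>x\<parallel>\<close>.\<close>
lemma vnorm_nonneg:
  assumes "nspace E" "x \<in> carr E" shows "vnorm E x \<ge> 0"
proof -
  have "vnorm E (vzero E) \<le> vnorm E x + vnorm E (vscal E (-1) x)"
    using ns_tri[OF assms ns_scal[OF assms, of "-1"]] ns_neg[OF assms] by simp
  moreover have "vnorm E (vzero E) = 0" using ns_n0[OF assms(1) ns_zero[OF assms(1)]] by simp
  moreover have "vnorm E (vscal E (-1) x) = vnorm E x" using ns_nscal[OF assms, of "-1"] by simp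
  ultimately show ?thesis by simp
qed

lemma bdualD:
  assumes "\<phi> \<in> bdual E"
  shows "\<And>x y. x\<in>carr E \<Longrightarrow> y\<in>carr E \<Longrightarrow> \<phi> (vplus E x y) = \<phi> x + \<phi> y"
    and "\<And>a x. x\<in>carr E \<Longrightarrow> \<phi> (vscal E a x) = a * \<phi> x"
    and "\<And>x. x \<notin> carr E \<Longrightarrow> \<phi> x = undefined"
  using assms unfolding bdual_def by auto

lemma bdual_zero:
  assumes "nspace E" "\<phi> \<in> bdual E" shows "\<phi> (vzero E) = 0"
proof -
  have z: "vzero E \<in> carr E" using ns_zero[OF assms(1)] .
  have "\<phi> (vzero E) = \<phi> (vzero E) + \<phi> (vzero E)"
    using bdualD(1)[OF assms(2) z z] ns_pz[OF assms(1) z] by simp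
  then show ?thesis by simp
qed

lemma bdual_bound:
  assumes "nspace E" "\<phi> \<in> bdual E" "x \<in> carr E"
  shows "norm (\<phi> x) \<le> dnorm E \<phi> * vnorm E x"
proof -
  define A where "A = {C. C \<ge> 0 \<and> (\<forall>x\<in>carr E. norm (\<phi> x) \<le> C * vnorm E x)}"
  obtain C where C: "\<forall>x\<in>carr E. norm (\<phi> x) \<le> C * vnorm E x"
    using assms(2) unfolding bdual_def by blast
  have "max C 0 \<in> A" unfolding A_def
  proof (intro CollectI conjI ballI)
    fix y assume y: "y \<in> carr E"
    then have "C * vnorm E y \<le> max C 0 * vnorm E y"
      using vnorm_nonneg[OF assms(1)] by (simp add: mult_right_mono)
    then show "norm (\<phi> y) \<le> max C 0 * vnorm E y" using C y by force
  qed simp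
  then have ne: "A \<noteq> {}" by blast
  show ?thesis
  proof (cases "vnorm E x = 0")
    case True
    then show ?thesis using ns_n0[OF assms(1,3)] bdual_zero[OF assms(1,2)] by simp
  next
    case False
    then have pos: "vnorm E x > 0" using vnorm_nonneg[OF assms(1,3)] by linarith
    have "norm (\<phi> x) / vnorm E x \<le> Inf A"
    proof (rule cInf_greatest[OF ne])
      fix c assume "c \<in> A"
      then show "norm (\<phi> x) / vnorm E x \<le> c"
        unfolding A_def using assms(3) pos by (simp add: pos_divide_le_eq)
    qed
    then show ?thesis unfolding dnorm_def A_def[symmetric] using pos by (simp add: pos_divide_le_eq)
  qed
qed

section \<open>The abstract dual space\<close>

lemma dualD:
  assumes "dual_space D F pr"
  shows dualD_ban: "banach_space D" and dualD_ns: "nspace F"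
    and dualD_bd: "\<And>d. d\<in>carr D \<Longrightarrow> restrict (pr d) (carr F) \<in> bdual F"
    and dualD_inj: "\<And>d d'. d\<in>carr D \<Longrightarrow> d'\<in>carr D \<Longrightarrow>
                      restrict (pr d) (carr F) = restrict (pr d') (carr F) \<Longrightarrow> d = d'"
    and dualD_nm: "\<And>d. d\<in>carr D \<Longrightarrow> vnorm D d = dnorm F (restrict (pr d) (carr F))"
    and dualD_add: "\<And>d d' y. d\<in>carr D \<Longrightarrow> d'\<in>carr D \<Longrightarrow> y\<in>carr F \<Longrightarrow>
                      pr (vplus D d d') y = pr d y + pr d' y"
    and dualD_scal: "\<And>a d y. d\<in>carr D \<Longrightarrow> y\<in>carr F \<Longrightarrow> pr (vscal D a d) y = a * pr d y"
  using assms unfolding dual_space_def by simp_all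

lemma dual_bound:
  assumes "dual_space D F pr" "d \<in> carr D" "y \<in> carr F"
  shows "norm (pr d y) \<le> vnorm D d * vnorm F y"
  using bdual_bound[OF dualD_ns[OF assms(1)] dualD_bd[OF assms(1,2)] assms(3)]
    dualD_nm[OF assms(1,2)] assms(3) by simp

lemma dual_lin:
  assumes "dual_space D F pr" "d \<in> carr D" "x \<in> carr F" "y \<in> carr F"
  shows "pr d (vplus F x y) = pr d x + pr d y" "pr d (vscal F a x) = a * pr d x"
proof -
  have b: "restrict (pr d) (carr F) \<in> bdual F" and nsF: "nspace F"
    using dualD_bd[OF assms(1,2)] dualD_ns[OF assms(1)] by auto
  show "pr d (vplus F x y) = pr d x + pr d y"
    using bdualD(1)[OF b assms(3,4)] assms(3,4) ns_plus[OF nsF assms(3,4)] by simp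
  show "pr d (vscal F a x) = a * pr d x"
    using bdualD(2)[OF b assms(3), of a] assms(3) ns_scal[OF nsF assms(3)] by simp
qed

section \<open>A copy of the scalar field\<close>

lemma scD:
  assumes "scalar_space S e"
  shows scD_ban: "banach_space S" and scD_e: "e \<in> carr S"
    and scD_inj: "inj (\<lambda>a. vscal S a e)" and scD_rng: "range (\<lambda>a. vscal S a e) = carr S"
    and scD_nm: "\<And>a. vnorm S (vscal S a e) = norm a"
  using assms unfolding scalar_space_def bij_betw_def by auto

lemma coord_vscal:
  assumes "scalar_space S e" shows "coord S e (vscal S a e) = a"
  unfolding coord_def using inv_into_f_f[OF scD_inj[OF assms], of a] by simp

lemma vscal_coord:
  assumes "scalar_space S e" "x \<in> carr S" shows "vscal S (coord S e x) e = x"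
  unfolding coord_def using f_inv_into_f[of x "\<lambda>a. vscal S a e" UNIV] scD_rng[OF assms(1)] assms(2)
  by simp

lemma coord_e:
  assumes "scalar_space S e" shows "coord S e e = 1"
  using coord_vscal[OF assms, of 1] ns_one[OF banach_ns[OF scD_ban[OF assms]] scD_e[OF assms]] by simp

lemma vnorm_coord:
  assumes "scalar_space S e" "x \<in> carr S" shows "vnorm S x = norm (coord S e x)"
  using scD_nm[OF assms(1), of "coord S e x"] vscal_coord[OF assms] by simp

lemma coord_add:
  assumes "scalar_space S e" "x \<in> carr S" "y \<in> carr S"
  shows "coord S e (vplus S x y) = coord S e x + coord S e y"
proof -
  have "vplus S x y = vplus S (vscal S (coord S e x) e) (vscal S (coord S e y) e)"
    using vscal_coord[OF assms(1,2)] vscal_coord[OF assms(1,3)] by simp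
  also have "\<dots> = vscal S (coord S e x + coord S e y) e"
    using ns_sadd[OF banach_ns[OF scD_ban[OF assms(1)]] scD_e[OF assms(1)]] by simp
  finally show ?thesis using coord_vscal[OF assms(1)] by simp
qed

lemma coord_scal:
  assumes "scalar_space S e" "x \<in> carr S"
  shows "coord S e (vscal S a x) = a * coord S e x"
proof -
  have "vscal S a x = vscal S a (vscal S (coord S e x) e)"
    using vscal_coord[OF assms(1,2)] by simp
  also have "\<dots> = vscal S (a * coord S e x) e"
    using ns_smul[OF banach_ns[OF scD_ban[OF assms(1)]] scD_e[OF assms(1)]] by simp
  finally show ?thesis using coord_vscal[OF assms(1)] by simp
qed

lemma scalar_functional_dnorm:
  assumes sc: "scalar_space S e"
  shows "dnorm S (restrict (\<lambda>x. c * coord S e x) (carr S)) = norm c"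
proof -
  have "{C. C \<ge> 0 \<and> (\<forall>x\<in>carr S. norm (restrict (\<lambda>x. c * coord S e x) (carr S) x) \<le> C * vnorm S x)}
        = {norm c..}"
  proof (intro set_eqI iffI)
    fix C assume "C \<in> {C. C \<ge> 0 \<and> (\<forall>x\<in>carr S. norm (restrict (\<lambda>x. c * coord S e x) (carr S) x)
                                                  \<le> C * vnorm S x)}"
    then have "norm (c * coord S e e) \<le> C * vnorm S e" using scD_e[OF sc] by auto
    then show "C \<in> {norm c..}" using coord_e[OF sc] vnorm_coord[OF sc scD_e[OF sc]] by simp
  next
    fix C assume "C \<in> {norm c..}"
    then have C: "C \<ge> norm c" by simp
    then have "\<forall>x\<in>carr S. norm (c * coord S e x) \<le> C * vnorm S x"
      by (auto simp: vnorm_coord[OF sc] norm_mult intro: mult_right_mono)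
    then show "C \<in> {C. C \<ge> 0 \<and> (\<forall>x\<in>carr S. norm (restrict (\<lambda>x. c * coord S e x) (carr S) x)
                                                  \<le> C * vnorm S x)}"
      using order_trans[OF norm_ge_zero C] by simp
  qed
  then show ?thesis unfolding dnorm_def by simp
qed

text \<open>A copy of \<bbbK> is its own dual under the pairing \<open>\<langle>d,x\<rangle> = coord d \<cdot> coord x\<close>.
  This lets representability be applied with target space \<bbbK>.\<close>
lemma scalar_dual:
  assumes sc: "scalar_space S e"
  shows "dual_space S S (\<lambda>d x. coord S e d * coord S e x)"
proof -
  define c where "c = coord S e"
  have ns: "nspace S" using banach_ns[OF scD_ban[OF sc]] .
  have eS: "e \<in> carr S" using scD_e[OF sc] .
  have cadd: "\<And>x y. x \<in> carr S \<Longrightarrow> y \<in> carr S \<Longrightarrow> c (vplus S x y) = c x + c y"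
    unfolding c_def using coord_add[OF sc] by blast
  have cscal: "\<And>a x. x \<in> carr S \<Longrightarrow> c (vscal S a x) = a * c x"
    unfolding c_def using coord_scal[OF sc] by blast
  have vc: "\<And>x. x \<in> carr S \<Longrightarrow> vscal S (c x) e = x"
    unfolding c_def using vscal_coord[OF sc] by blast
  show ?thesis unfolding c_def[symmetric] dual_space_def
  proof (intro conjI ballI allI impI scD_ban[OF sc] ns)
    fix d
    show "restrict (\<lambda>x. c d * c x) (carr S) \<in> bdual S"
      unfolding bdual_def
    proof (intro CollectI conjI allI ballI impI)
      show "\<exists>C. \<forall>x\<in>carr S. norm (restrict (\<lambda>x. c d * c x) (carr S) x) \<le> C * vnorm S x"
        by (rule exI[of _ "norm (c d)"]) (simp add: c_def vnorm_coord[OF sc] norm_mult)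
    qed (auto simp: cadd cscal ns_plus[OF ns] ns_scal[OF ns] algebra_simps)
  next
    fix \<phi> assume ph: "\<phi> \<in> bdual S"
    have "restrict (\<lambda>x. c (vscal S (\<phi> e) e) * c x) (carr S) = \<phi>"
    proof
      fix x show "restrict (\<lambda>x. c (vscal S (\<phi> e) e) * c x) (carr S) x = \<phi> x"
      proof (cases "x \<in> carr S")
        case True
        have "\<phi> x = c x * \<phi> e" using bdualD(2)[OF ph eS, of "c x"] vc[OF True] by simp
        then show ?thesis using True coord_vscal[OF sc] by (simp add: c_def)
      qed (simp add: bdualD(3)[OF ph])
    qed
    then show "\<exists>d\<in>carr S. restrict (\<lambda>x. c d * c x) (carr S) = \<phi>" using ns_scal[OF ns eS] by blast
  next
    fix d d' y assume "d \<in> carr S" "d' \<in> carr S" "y \<in> carr S"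
    then show "c (vplus S d d') * c y = c d * c y + c d' * c y" by (simp add: cadd algebra_simps)
  next
    fix a d y assume "d \<in> carr S" "y \<in> carr S"
    then show "c (vscal S a d) * c y = a * (c d * c y)" by (simp add: cscal)
  next
    fix d d' assume dd: "d \<in> carr S" "d' \<in> carr S"
      "restrict (\<lambda>x. c d * c x) (carr S) = restrict (\<lambda>x. c d' * c x) (carr S)"
    then have "c d * c e = c d' * c e" by (metis eS restrict_apply')
    then have "c d = c d'" using coord_e[OF sc] by (simp add: c_def)
    then show "d = d'" using vc dd(1,2) by metis
  next
    fix d assume "d \<in> carr S"
    then show "vnorm S d = dnorm S (restrict (\<lambda>x. c d * c x) (carr S))"
      unfolding c_def using scalar_functional_dnorm[OF sc] vnorm_coord[OF sc] by simp
  qed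
qed

lemma prodcarr_snoc:
  "xs @ [y] \<in> prodcarr (Es @ [F]) \<longleftrightarrow> xs \<in> prodcarr Es \<and> y \<in> carr F"
  unfolding prodcarr_def
proof safe
  fix i assume "length (xs @ [y]) = length (Es @ [F])"
    "\<forall>i<length (Es @ [F]). (xs @ [y]) ! i \<in> carr ((Es @ [F]) ! i)" "i < length Es"
  then show "xs ! i \<in> carr (Es ! i)"
    by (metis length_append_singleton less_SucI nat.inject nth_append_left)
qed (auto simp: nth_append less_Suc_eq)

lemma prodcarr_snocE:
  assumes "zs \<in> prodcarr (Es @ [F])"
  obtains xs y where "zs = xs @ [y]" "xs \<in> prodcarr Es" "y \<in> carr F"
proof -
  have "zs \<noteq> []" using assms unfolding prodcarr_def by auto
  then have "zs = butlast zs @ [last zs]" by simp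
  then show ?thesis using that assms prodcarr_snoc by metis
qed

lemma prodcarr_upd:
  assumes "zs \<in> prodcarr Ds" "i < length Ds" "v \<in> carr (Ds ! i)"
  shows "zs[i := v] \<in> prodcarr Ds"
  using assms unfolding prodcarr_def by (auto simp: nth_list_update)

lemma prodcarr_nth:
  assumes "zs \<in> prodcarr Ds" "i < length Ds" shows "zs ! i \<in> carr (Ds ! i)"
  using assms unfolding prodcarr_def by auto

section \<open>Multilinear maps and the form induced by an operator into a dual\<close>

lemma mlLD:
  assumes "T \<in> mlL Es G"
  shows mlLD_carr: "\<And>xs. xs\<in>prodcarr Es \<Longrightarrow> T xs \<in> carr G"
    and mlLD_undef: "\<And>xs. xs \<notin> prodcarr Es \<Longrightarrow> T xs = undefined"
    and mlLD_ml: "multilin Es G T"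
    and mlLD_bd: "\<exists>C. \<forall>xs\<in>prodcarr Es. vnorm G (T xs) \<le> C * (\<Prod>i<length Es. vnorm (Es ! i) (xs ! i))"
  using assms unfolding mlL_def by auto

lemma multilinD:
  assumes "multilin Es G T" "xs\<in>prodcarr Es" "i<length Es" "y\<in>carr (Es ! i)"
  shows "T (xs[i := vplus (Es ! i) (xs ! i) y]) = vplus G (T xs) (T (xs[i := y]))"
    and "T (xs[i := vscal (Es ! i) a (xs ! i)]) = vscal G a (T xs)"
  using assms unfolding multilin_def by auto

text \<open>An n-linear map \<open>T\<close> into \<open>F'\<close> induces the (n+1)-linear form
  \<open>B(x_1,\<dots>,x_n,y) = T(x_1,\<dots>,x_n)(y)\<close>: linearity in the first n slots comes from
  that of \<open>T\<close> and of the pairing in \<open>d\<close>, in the last slot from linearity of each functional.\<close>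
lemma induced_form_multilin:
  assumes ds: "dual_space Fd F pr" and T: "T \<in> mlL Es Fd"
  shows "multilin_form (Es @ [F]) (\<lambda>zs. pr (T (butlast zs)) (last zs))"
  unfolding multilin_form_def
proof (intro ballI allI impI)
  fix zs i y a
  assume zs: "zs \<in> prodcarr (Es @ [F])" and i: "i < length (Es @ [F])"
    and y: "y \<in> carr ((Es @ [F]) ! i)"
  obtain xs w where zw: "zs = xs @ [w]" "xs \<in> prodcarr Es" "w \<in> carr F"
    using prodcarr_snocE[OF zs] by blast
  have lx: "length xs = length Es" using zw(2) unfolding prodcarr_def by simp
  have d1: "T xs \<in> carr Fd" using mlLD_carr[OF T zw(2)] .
  show "pr (T (butlast (zs[i := vplus ((Es @ [F]) ! i) (zs ! i) y])))
          (last (zs[i := vplus ((Es @ [F]) ! i) (zs ! i) y])) =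
         pr (T (butlast zs)) (last zs) + pr (T (butlast (zs[i := y]))) (last (zs[i := y])) \<and>
        pr (T (butlast (zs[i := vscal ((Es @ [F]) ! i) a (zs ! i)])))
          (last (zs[i := vscal ((Es @ [F]) ! i) a (zs ! i)])) =
         a * pr (T (butlast zs)) (last zs)"
  proof (cases "i < length Es")
    case True
    have yE: "y \<in> carr (Es ! i)" using y True by (simp add: nth_append)
    have d2: "T (xs[i := y]) \<in> carr Fd" using mlLD_carr[OF T prodcarr_upd[OF zw(2) True yE]] .
    have upd: "\<And>v. zs[i := v] = xs[i := v] @ [w]" using zw(1) lx True by (simp add: list_update_append1)
    have nth: "zs ! i = xs ! i" "(Es @ [F]) ! i = Es ! i" using zw(1) lx True by (auto simp: nth_append)
    show ?thesis unfolding upd nth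
      using multilinD[OF mlLD_ml[OF T] zw(2) True yE] dualD_add[OF ds d1 d2 zw(3)]
        dualD_scal[OF ds d1 zw(3)] zw(1) by simp
  next
    case False
    then have ii: "i = length Es" using i by simp
    have upd: "\<And>v. zs[i := v] = xs @ [v]" using zw(1) lx ii by (metis list_update_length)
    have nth: "zs ! i = w" "(Es @ [F]) ! i = F" using zw(1) lx ii by (metis nth_append_length)+
    show ?thesis unfolding upd nth using zw(1) dual_lin[OF ds d1 zw(3)] y nth(2) by simp
  qed
qed

text \<open>The induced form is bounded: \<open>|B(x,y)| \<le> \<parallel>T x\<parallel> \<parallel>y\<parallel> \<le> C \<prod>\<parallel>x_i\<parallel> \<parallel>y\<parallel>\<close>.\<close>
lemma induced_form_bounded:
  assumes ds: "dual_space Fd F pr" and T: "T \<in> mlL Es Fd"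
  shows "\<exists>C. \<forall>zs\<in>prodcarr (Es @ [F]). norm (pr (T (butlast zs)) (last zs))
                \<le> C * (\<Prod>i<length (Es @ [F]). vnorm ((Es @ [F]) ! i) (zs ! i))"
proof -
  obtain C where C: "\<forall>xs\<in>prodcarr Es. vnorm Fd (T xs) \<le> C * (\<Prod>i<length Es. vnorm (Es ! i) (xs ! i))"
    using mlLD_bd[OF T] by blast
  have "norm (pr (T (butlast zs)) (last zs))
          \<le> C * (\<Prod>i<length (Es @ [F]). vnorm ((Es @ [F]) ! i) (zs ! i))"
    if zs: "zs \<in> prodcarr (Es @ [F])" for zs
  proof -
    obtain xs w where zw: "zs = xs @ [w]" "xs \<in> prodcarr Es" "w \<in> carr F"
      using prodcarr_snocE[OF zs] by blast
    have lx: "length xs = length Es" using zw(2) unfolding prodcarr_def by simp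
    have "norm (pr (T xs) w) \<le> vnorm Fd (T xs) * vnorm F w"
      using dual_bound[OF ds mlLD_carr[OF T zw(2)] zw(3)] .
    also have "\<dots> \<le> C * (\<Prod>i<length Es. vnorm (Es ! i) (xs ! i)) * vnorm F w"
      using C zw(2) vnorm_nonneg[OF dualD_ns[OF ds] zw(3)] by (simp add: mult_right_mono)
    finally show ?thesis using zw(1) lx by (simp add: nth_append mult.assoc)
  qed
  then show ?thesis by blast
qed

lemma scalar_map_of_form:
  assumes sc: "scalar_space K e" and nsD: "\<forall>D\<in>set Ds. nspace D"
    and mB: "multilin_form Ds B"
    and bd: "\<forall>zs\<in>prodcarr Ds. norm (B zs) \<le> C * (\<Prod>i<length Ds. vnorm (Ds ! i) (zs ! i))"
  shows "(\<lambda>zs. if zs \<in> prodcarr Ds then vscal K (B zs) e else undefined) \<in> mlL Ds K"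
proof -
  define S where "S = (\<lambda>zs. if zs \<in> prodcarr Ds then vscal K (B zs) e else undefined)"
  have nsK: "nspace K" using banach_ns[OF scD_ban[OF sc]] .
  have eK: "e \<in> carr K" using scD_e[OF sc] .
  have "multilin Ds K S"
    unfolding multilin_def
  proof (intro ballI allI impI conjI)
    fix zs i y a
    assume zs: "zs \<in> prodcarr Ds" and i: "i < length Ds" and y: "y \<in> carr (Ds ! i)"
    have nsi: "nspace (Ds ! i)" using nsD i by simp
    have zi: "zs ! i \<in> carr (Ds ! i)" using prodcarr_nth[OF zs i] .
    have B: "B (zs[i := vplus (Ds ! i) (zs ! i) y]) = B zs + B (zs[i := y])"
      "B (zs[i := vscal (Ds ! i) a (zs ! i)]) = a * B zs"
      using mB zs i y unfolding multilin_form_def by blast+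
    show "S (zs[i := vplus (Ds ! i) (zs ! i) y]) = vplus K (S zs) (S (zs[i := y]))"
      unfolding S_def using prodcarr_upd[OF zs i ns_plus[OF nsi zi y]] prodcarr_upd[OF zs i y] zs B
        ns_sadd[OF nsK eK] by simp
    show "S (zs[i := vscal (Ds ! i) a (zs ! i)]) = vscal K a (S zs)"
      unfolding S_def using prodcarr_upd[OF zs i ns_scal[OF nsi zi]] zs B ns_smul[OF nsK eK] by simp
  qed
  moreover have "\<forall>zs\<in>prodcarr Ds. vnorm K (S zs) \<le> C * (\<Prod>i<length Ds. vnorm (Ds ! i) (zs ! i))"
    using bd scD_nm[OF sc] by (simp add: S_def)
  moreover have "\<forall>zs\<in>prodcarr Ds. S zs \<in> carr K" using ns_scal[OF nsK eK] by (simp add: S_def)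
  moreover have "\<forall>zs. zs \<notin> prodcarr Ds \<longrightarrow> S zs = undefined" by (simp add: S_def)
  ultimately have "S \<in> mlL Ds K" unfolding mlL_def by blast
  then show ?thesis unfolding S_def .
qed

text \<open>An element of \<open>\<L>(E_1,\<dots>,E_n;F')\<close> is determined by its induced form,
  because the pairing identifies elements of \<open>D \<cong> F'\<close> with functionals on \<open>F\<close>.\<close>
lemma induced_form_inj:
  assumes ds: "dual_space Fd F pr" and T: "T \<in> mlL Es Fd" and T': "T' \<in> mlL Es Fd"
    and eq: "\<forall>zs\<in>prodcarr (Es @ [F]). pr (T (butlast zs)) (last zs) = pr (T' (butlast zs)) (last zs)"
  shows "T = T'"
proof
  fix xs show "T xs = T' xs"
  proof (cases "xs \<in> prodcarr Es")
    case True
    have "restrict (pr (T xs)) (carr F) = restrict (pr (T' xs)) (carr F)"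
    proof
      fix y show "restrict (pr (T xs)) (carr F) y = restrict (pr (T' xs)) (carr F) y"
        using eq[rule_format, of "xs @ [y]"] True by (simp add: prodcarr_snoc)
    qed
    then show ?thesis by (rule dualD_inj[OF ds mlLD_carr[OF T True] mlLD_carr[OF T' True]])
  qed (simp add: mlLD_undef[OF T] mlLD_undef[OF T'])
qed

section \<open>Smoothness, multi-ideals and representation\<close>

lemma smooth_append_unit:
  assumes sm: "smooth \<beta>" and Dne: "Ds \<noteq> []" and nsD: "\<forall>D\<in>set Ds. nspace D"
    and sc: "scalar_space S e" and u: "u \<in> tensors Ds"
  shows "\<beta> (Ds @ [S]) (map (\<lambda>xs. xs @ [e]) u) = \<beta> Ds u"
proof -
  have ue: "map (\<lambda>xs. xs @ [e]) u \<in> tensors (Ds @ [S])"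
    using u scD_e[OF sc] unfolding tensors_def by (auto simp: prodcarr_snoc)
  have ns0: "nspace (Ds ! 0)" using nsD Dne by simp
  have "map (\<lambda>zs. vscal (Ds ! 0) (coord S e (last zs)) (zs ! 0) # tl (butlast zs))
          (map (\<lambda>xs. xs @ [e]) u) = u"
    unfolding map_map o_def
  proof (rule map_idI)
    fix xs assume "xs \<in> set u"
    then have xP: "xs \<in> prodcarr Ds" using u unfolding tensors_def by blast
    then have ne: "xs \<noteq> []" using Dne unfolding prodcarr_def by auto
    have "vscal (Ds ! 0) 1 (xs ! 0) = xs ! 0"
      using ns_one[OF ns0 prodcarr_nth[OF xP]] Dne by simp
    then show "vscal (Ds ! 0) (coord S e (last (xs @ [e]))) ((xs @ [e]) ! 0) # tl (butlast (xs @ [e])) = xs"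
      using coord_e[OF sc] ne by (simp add: nth_append hd_conv_nth[symmetric])
  qed
  then show ?thesis
    using sm[unfolded smooth_def, rule_format, OF conjI[OF Dne conjI[OF nsD sc]] ue] by simp
qed

lemma smooth_tbounded_drop_unit:
  assumes sm: "smooth \<beta>" and Dne: "Ds \<noteq> []" and nsD: "\<forall>D\<in>set Ds. nspace D"
    and sc: "scalar_space S e"
    and GB: "\<forall>xs\<in>prodcarr Ds. G (xs @ [e]) = B xs"
    and G: "tbounded \<beta> (Ds @ [S]) G"
  shows "tbounded \<beta> Ds B"
proof -
  obtain C where C: "\<forall>w\<in>tensors (Ds @ [S]). norm (\<Sum>zs\<leftarrow>w. G zs) \<le> C * \<beta> (Ds @ [S]) w"
    using G unfolding tbounded_def by blast
  have "norm (\<Sum>xs\<leftarrow>u. B xs) \<le> C * \<beta> Ds u" if u: "u \<in> tensors Ds" for u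
  proof -
    have ue: "map (\<lambda>xs. xs @ [e]) u \<in> tensors (Ds @ [S])"
      using u scD_e[OF sc] unfolding tensors_def by (auto simp: prodcarr_snoc)
    have "(\<Sum>zs\<leftarrow>map (\<lambda>xs. xs @ [e]) u. G zs) = (\<Sum>xs\<leftarrow>u. B xs)"
      unfolding map_map o_def
    proof (rule arg_cong[where f = sum_list], rule map_cong[OF refl])
      fix xs assume "xs \<in> set u"
      then show "G (xs @ [e]) = B xs" using u GB unfolding tensors_def by blast
    qed
    then show ?thesis
      using C[rule_format, OF ue] smooth_append_unit[OF sm Dne nsD sc u] by simp
  qed
  then show ?thesis unfolding tbounded_def by blast
qed

lemma multi_ideal_sub:
  assumes "multi_ideal M MN" "Es \<noteq> []" "\<forall>E\<in>set Es. banach_space E" "banach_space G"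
  shows "M Es G \<subseteq> mlL Es G"
proof -
  note X = assms(1)[unfolded multi_ideal_def, THEN conjunct1, rule_format, of Es G]
  show ?thesis using X[OF conjI[OF assms(2) conjI[OF assms(3,4)]]] by (rule conjunct1)
qed

lemma represents_bounded:
  assumes "represents \<beta> M MN" "Es \<noteq> []" "\<forall>E\<in>set Es. banach_space E" "banach_space F"
    "dual_space D F pr" "T \<in> M Es D"
  shows "tbounded \<beta> (Es @ [F]) (\<lambda>zs. pr (T (butlast zs)) (last zs))"
  using assms(1)[unfolded represents_def, rule_format, OF conjI[OF assms(2) conjI[OF assms(3)
      conjI[OF assms(4,5)]]], THEN conjunct1] assms(6) by blast

lemma represents_onto:
  assumes "represents \<beta> M MN" "Es \<noteq> []" "\<forall>E\<in>set Es. banach_space E" "banach_space F"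
    "dual_space D F pr" "multilin_form (Es @ [F]) B" "tbounded \<beta> (Es @ [F]) B"
  shows "\<exists>T\<in>M Es D. \<forall>zs\<in>prodcarr (Es @ [F]). B zs = pr (T (butlast zs)) (last zs)"
  using assms(1)[unfolded represents_def, rule_format, OF conjI[OF assms(2) conjI[OF assms(3)
      conjI[OF assms(4,5)]]], THEN conjunct2] assms(6,7) by blast

theorem proposition2p8:
  fixes M :: "('v,'k::real_normed_field) bspace list \<Rightarrow> ('v,'k) bspace \<Rightarrow> ('v list \<Rightarrow> 'v) set"
    and MN :: "('v,'k) bspace list \<Rightarrow> ('v,'k) bspace \<Rightarrow> ('v list \<Rightarrow> 'v) \<Rightarrow> real"
    and Es :: "('v,'k) bspace list" and F Fd Kf :: "('v,'k) bspace"
    and pr :: "'v \<Rightarrow> 'v \<Rightarrow> 'k" and e :: 'v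
  assumes "multi_ideal M MN"
    and "length Es \<ge> 1"
    and "\<forall>E\<in>set Es. banach_space E" and "banach_space F"
    and "scalar_space Kf e"
    and "dual_space Fd F pr"
    and "M (Es @ [F]) Kf = mlL (Es @ [F]) Kf"
    and "M Es Fd \<noteq> mlL Es Fd"
  shows "\<not> (\<exists>\<beta>. tensor_norm \<beta> \<and> smooth \<beta> \<and> represents \<beta> M MN)"
proof
  assume "\<exists>\<beta>. tensor_norm \<beta> \<and> smooth \<beta> \<and> represents \<beta> M MN"
  then obtain \<beta> where sm: "smooth \<beta>" and rep: "represents \<beta> M MN" by blast
  note ban = assms(3,4) and sc = assms(5) and ds = assms(6)
  have Ene: "Es \<noteq> []" using assms(2) by auto
  have banEF: "\<forall>E\<in>set (Es @ [F]). banach_space E" using ban by auto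
  then have nsEF: "\<forall>E\<in>set (Es @ [F]). nspace E" using banach_ns by blast
  have sub: "M Es Fd \<subseteq> mlL Es Fd" using multi_ideal_sub[OF assms(1) Ene assms(3) dualD_ban[OF ds]] .
  then obtain T where T: "T \<in> mlL Es Fd" "T \<notin> M Es Fd" using assms(8) by blast
  define B where "B = (\<lambda>zs. pr (T (butlast zs)) (last zs))"
  have mB: "multilin_form (Es @ [F]) B" unfolding B_def using induced_form_multilin[OF ds T(1)] .
  define S where "S = (\<lambda>zs. if zs \<in> prodcarr (Es @ [F]) then vscal Kf (B zs) e else undefined)"
  obtain C where "\<forall>zs\<in>prodcarr (Es @ [F]).
      norm (B zs) \<le> C * (\<Prod>i<length (Es @ [F]). vnorm ((Es @ [F]) ! i) (zs ! i))"
    using induced_form_bounded[OF ds T(1)] unfolding B_def by blast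
  then have "S \<in> mlL (Es @ [F]) Kf" unfolding S_def by (rule scalar_map_of_form[OF sc nsEF mB])
  then have SM: "S \<in> M (Es @ [F]) Kf" using assms(7) by simp
  have "tbounded \<beta> (Es @ [F]) B"
  proof (rule smooth_tbounded_drop_unit[OF sm _ _ sc _
          represents_bounded[OF rep _ banEF scD_ban[OF sc] scalar_dual[OF sc] SM]])
    show "\<forall>xs\<in>prodcarr (Es @ [F]). coord Kf e (S (butlast (xs @ [e]))) * coord Kf e (last (xs @ [e])) = B xs"
      using coord_vscal[OF sc] coord_e[OF sc] by (simp add: S_def)
  qed (simp_all add: nsEF)
  then obtain T' where "T' \<in> M Es Fd" "\<forall>zs\<in>prodcarr (Es @ [F]). B zs = pr (T' (butlast zs)) (last zs)"
    using represents_onto[OF rep Ene ban ds mB] by blast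
  then have "T = T'" using induced_form_inj[OF ds T(1) subsetD[OF sub]] unfolding B_def by simp
  then show False using T(2) \<open>T' \<in> M Es Fd\<close> by simp
qed

end
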